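(* Let $X=(X,d,\mu)$ be a metric measure space with $\mu$ uniformly locally doubling, and let $\mathfrak m$ be a weakly noncollapsed measure on $X$. Let $E\subset X$ be a Borel set and $c\ge1$, and put $N=\underline C_{\mathfrak m}(5\max\{c,5\})$. Then for $\mathfrak m$-a.e. $x\in E$ there is a sequence $r_l(x)$ decreasing to $0$ such that $$\limsup_{l\to\infty}\frac{\mathfrak m(B_{\max\{c,5\}r_l(x)}(x))}{\mathfrak m(B_{r_l(x)}(x))}\le N\quad\text{and}\quad\liminf_{l\to\infty}\frac{\mathfrak m(B_{r_l(x)}(x)\cap E)}{\mathfrak m(B_{r_l(x)}(x))}\ge\frac1{2N}.$$ In particular $\limsup_{r\to0}\mathfrak m(B_r(x)\cap E)/\mathfrak m(B_r(x))>0$ for $\mathfrak m$-a.e. $x\in E$.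
   Context: A metric measure space is a triple $X=(X,d,\mu)$ with $(X,d)$ a complete separable metric space and $\mu$ a Borel regular measure with $0<\mu(B)<\infty$ for every ball $B$ and $\operatorname{supp}\mu=X$. All balls are closed: $B_r(x)=\{y:d(x,y)\le r\}$. A measure on $X$ means a nonzero Borel regular locally finite (outer) measure. $\mu$ is uniformly locally doubling if for every $R>0$, $\sup_{r\in(0,R]}\sup_{x}\mu(B_{2r}(x))/\mu(B_r(x))<\infty$. A measure $\mathfrak m$ is weakly noncollapsed if $\inf_{x\in\operatorname{supp}\mathfrak m}\liminf_{r\to0}\mathfrak m(B_r(x))/\mu(B_r(x))>0$. For $c>0$, $\underline C_{\mathfrak m}(c):=\lim_{R\to0^+}\sup_{x\in\operatorname{supp}\mathfrak m}\inf_{r\in(0,R]}\mathfrak m(B_{cr}(x))/\mathfrak m(B_r(x))$ (finite for weakly noncollapsed $\mathfrak m$). *)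

theory Defs
  imports "HOL-Analysis.Analysis"
begin

text \<open>Measures are Borel measures
(sets = Borel sets); for Borel regular outer measures, being m-null is the same
as being contained in a Borel m-null set, so AE x in m is the paper's m-a.e.\<close>

definition mms :: "'a::polish_space measure \<Rightarrow> bool" where
  "mms \<mu> \<longleftrightarrow> sets \<mu> = sets borel \<and>
     (\<forall>x r. r > 0 \<longrightarrow> 0 < emeasure \<mu> (cball x r) \<and> emeasure \<mu> (cball x r) < \<infinity>)"

definition supp :: "'a::metric_space measure \<Rightarrow> 'a set" where
  "supp m = {x. \<forall>r>0. emeasure m (cball x r) > 0}"

definition unif_loc_doubling :: "'a::metric_space measure \<Rightarrow> bool" where
  "unif_loc_doubling \<mu> \<longleftrightarrow>
     (\<forall>R>0. \<exists>C. \<forall>r\<in>{0<..R}. \<forall>x.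
        emeasure \<mu> (cball x (2*r)) \<le> ennreal C * emeasure \<mu> (cball x r))"

definition is_measure_on :: "'a::metric_space measure \<Rightarrow> bool" where
  "is_measure_on m \<longleftrightarrow> sets m = sets borel \<and> emeasure m UNIV \<noteq> 0 \<and>
     (\<forall>x. \<exists>r>0. emeasure m (cball x r) < \<infinity>)"

definition weakly_noncollapsed :: "'a::metric_space measure \<Rightarrow> 'a measure \<Rightarrow> bool" where
  "weakly_noncollapsed \<mu> m \<longleftrightarrow>
     (INF x\<in>supp m. Liminf (at_right 0)
        (\<lambda>r. ereal (measure m (cball x r) / measure \<mu> (cball x r)))) > 0"

definition lower_C :: "'a::metric_space measure \<Rightarrow> real \<Rightarrow> ereal" where
  "lower_C m c = Lim (at_right 0)
     (\<lambda>R. SUP x\<in>supp m. INF r\<in>{0<..R}.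
        ereal (measure m (cball x (c*r)) / measure m (cball x r)))"

end

theory Submission
  imports Defs
begin

text \<open>For \<open>K = 5 max{c,5}\<close>, the constant \<open>N = lower_C m K\<close> is finite: uniform local doubling of
  \<open>\<mu>\<close> together with weak noncollapsing of \<open>m\<close> bounds the ratios \<open>m(B(x,Kr)) / m(B(x,r))\<close> at some
  small scale near every point of the support. So \<open>m\<close>-almost every point has arbitrarily small
  radii at which the enlarged ball is at most \<open>N + \<epsilon>\<close> times heavier. Among such radii, the points of
  \<open>E\<close> where \<open>E\<close> eventually has density below a fixed \<open>\<theta> < 1\<close> form a null set; this is a Vitali
  covering argument with the 5-fold enlargements controlled by the doubling-type bound. A diagonal
  choice of radii for \<open>\<epsilon> = 1/(l+1)\<close> and \<open>\<theta> = 1/(2N)\<close> yields the sequence \<open>r_l\<close>.\<close>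

section \<open>Vitali covering lemma in separable metric spaces\<close>

lemma intersecting_cball_subset_cball:
  fixes a b :: "'a::metric_space"
  assumes "\<not> disjnt (cball a r) (cball b s)" and "r \<le> 2 * s"
  shows "cball a r \<subseteq> cball b (5 * s)"
proof
  fix y assume y: "y \<in> cball a r"
  obtain z where "dist a z \<le> r" "dist b z \<le> s"
    using assms(1) by (auto simp: disjnt_def)
  moreover have "dist b y \<le> dist b z + dist z a + dist a y"
    using dist_triangle[of b y z] dist_triangle[of z y a] by linarith
  ultimately show "y \<in> cball b (5 * s)"
    using y assms(2) by (simp add: dist_commute)
qed

lemma countable_disjoint_cballs:
  fixes a :: "'i \<Rightarrow> 'a::{metric_space,second_countable_topology}"
  assumes disj: "pairwise (\<lambda>i j. disjnt (cball (a i) (r i)) (cball (a j) (r j))) C"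
    and pos: "\<And>i. i \<in> C \<Longrightarrow> 0 < r i"
  shows "countable C"
proof (rule countable_image_inj_on)
  show "countable ((\<lambda>i. cball (a i) (r i)) ` C)"
  proof (rule countable_disjoint_nonempty_interior_subsets)
    show "pairwise disjnt ((\<lambda>i. cball (a i) (r i)) ` C)"
      using disj by (auto simp: pairwise_def)
    show "S = {}" if "S \<in> (\<lambda>i. cball (a i) (r i)) ` C" "interior S = {}" for S
    proof -
      from that obtain i where "i \<in> C" "S = cball (a i) (r i)"
        by blast
      then have "a i \<in> interior S"
        using pos interior_maximal[OF ball_subset_cball open_ball] by fastforce
      with that show ?thesis
        by blast
    qed
  qed
  show "inj_on (\<lambda>i. cball (a i) (r i)) C"
  proof
    fix i j assume "i \<in> C" "j \<in> C" and eq: "cball (a i) (r i) = cball (a j) (r j)"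
    have "a i \<in> cball (a i) (r i)"
      using pos[OF \<open>i \<in> C\<close>] by simp
    then have "a i \<in> cball (a i) (r i) \<inter> cball (a j) (r j)"
      using eq by simp
    then show "i = j"
      using disj \<open>i \<in> C\<close> \<open>j \<in> C\<close> unfolding pairwise_def disjnt_def by blast
  qed
qed

lemma nearly_largest_cball_avoiding:
  fixes a :: "'i \<Rightarrow> 'a::metric_space"
  assumes r: "\<And>i. i \<in> K \<Longrightarrow> 0 < r i \<and> r i \<le> B"
    and i: "i \<in> K" "\<forall>j\<in>C. disjnt (cball (a i) (r i)) (cball (a j) (r j))"
  obtains i0 where "i0 \<in> K" "i0 \<notin> C" "\<forall>j\<in>C. disjnt (cball (a i0) (r i0)) (cball (a j) (r j))"
    "\<And>i. i \<in> K \<Longrightarrow> \<forall>j\<in>C. disjnt (cball (a i) (r i)) (cball (a j) (r j)) \<Longrightarrow> r i \<le> 2 * r i0"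
proof -
  define D where "D = {i\<in>K. \<forall>j\<in>C. disjnt (cball (a i) (r i)) (cball (a j) (r j))}"
  have "i \<in> D"
    using i by (simp add: D_def)
  have bdd: "bdd_above (r ` D)"
    using r by (auto simp: D_def bdd_above_def)
  have "Sup (r ` D) / 2 < Sup (r ` D)"
    using cSup_upper[OF imageI[OF \<open>i \<in> D\<close>] bdd] r[of i] \<open>i \<in> D\<close> by (auto simp: D_def)
  then obtain i0 where i0: "i0 \<in> D" "Sup (r ` D) / 2 < r i0"
    using less_cSup_iff[of "r ` D" "Sup (r ` D) / 2"] bdd \<open>i \<in> D\<close> by auto
  have "0 < r i0"
    using i0(1) r by (simp add: D_def)
  then have "\<not> disjnt (cball (a i0) (r i0)) (cball (a i0) (r i0))"
    by (simp add: disjnt_def)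
  with i0 have "i0 \<notin> C"
    unfolding D_def by blast
  moreover have "r i' \<le> 2 * r i0" if "i' \<in> D" for i'
    using cSup_upper[OF imageI[OF that] bdd] i0(2) by simp
  ultimately show thesis
    using that i0(1) by (auto simp: D_def)
qed

lemma Vitali_covering_lemma_cballs_metric:
  fixes a :: "'i \<Rightarrow> 'a::{metric_space,second_countable_topology}"
  assumes S: "S \<subseteq> (\<Union>i\<in>K. cball (a i) (r i))"
    and r: "\<And>i. i \<in> K \<Longrightarrow> 0 < r i \<and> r i \<le> B"
  obtains C where "countable C" "C \<subseteq> K"
    "pairwise (\<lambda>i j. disjnt (cball (a i) (r i)) (cball (a j) (r j))) C"
    "S \<subseteq> (\<Union>i\<in>C. cball (a i) (5 * r i))"
proof -
  let ?B = "\<lambda>i. cball (a i) (r i)"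
  let ?disj = "pairwise (\<lambda>i j. disjnt (?B i) (?B j))"
  \<comment> \<open>Zorn's lemma on disjoint families keeping this domination invariant replaces the usual
      induction over dyadic classes of radii.\<close>
  define admissible where "admissible C \<longleftrightarrow> C \<subseteq> K \<and> ?disj C \<and>
      (\<forall>i\<in>K. (\<exists>j\<in>C. \<not> disjnt (?B i) (?B j)) \<longrightarrow> (\<exists>j\<in>C. \<not> disjnt (?B i) (?B j) \<and> r i \<le> 2 * r j))"
    for C
  have "\<forall>\<C>\<in>chains {C. admissible C}. \<Union>\<C> \<in> {C. admissible C}"
  proof safe
    fix \<C> assume \<C>: "\<C> \<in> chains {C. admissible C}"
    then have "?disj (\<Union>\<C>)"
      by (intro pairwise_chain_Union) (auto simp: chains_def admissible_def)
    with \<C> show "admissible (\<Union>\<C>)"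
      unfolding admissible_def chains_def by blast
  qed
  then obtain C where C: "admissible C" and maximal: "\<And>C'. admissible C' \<Longrightarrow> C \<subseteq> C' \<Longrightarrow> C' = C"
    using Zorn_Lemma[of "{C. admissible C}"] by auto
  have cover: "\<exists>j\<in>C. \<not> disjnt (?B i) (?B j) \<and> r i \<le> 2 * r j" if i: "i \<in> K" for i
  proof (rule ccontr)
    assume "\<not> ?thesis"
    with C i have misses: "\<forall>j\<in>C. disjnt (?B i) (?B j)"
      by (auto simp: admissible_def)
    then obtain i0 where i0: "i0 \<in> K" "i0 \<notin> C" "\<forall>j\<in>C. disjnt (?B i0) (?B j)"
      and largest: "\<And>i. i \<in> K \<Longrightarrow> \<forall>j\<in>C. disjnt (?B i) (?B j) \<Longrightarrow> r i \<le> 2 * r i0"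
      using nearly_largest_cball_avoiding[where a = a and r = r and C = C, OF r i misses] by blast
    have "admissible (insert i0 C)"
      using C i0 largest unfolding admissible_def
      by (auto simp: pairwise_insert disjnt_sym)
    with maximal i0(2) show False
      by blast
  qed
  show thesis
  proof
    show "countable C"
      using C r by (intro countable_disjoint_cballs[of a r]) (auto simp: admissible_def)
    show "C \<subseteq> K" "?disj C"
      using C by (auto simp: admissible_def)
    show "S \<subseteq> (\<Union>i\<in>C. cball (a i) (5 * r i))"
    proof
      fix x assume "x \<in> S"
      then obtain i where "i \<in> K" "x \<in> ?B i"
        using S by blast
      moreover obtain j where "j \<in> C" "\<not> disjnt (?B i) (?B j)" "r i \<le> 2 * r j"
        using cover[OF \<open>i \<in> K\<close>] by blast
      ultimately show "x \<in> (\<Union>i\<in>C. cball (a i) (5 * r i))"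
        using intersecting_cball_subset_cball by blast
    qed
  qed
qed

section \<open>Sets of low density at good radii are null\<close>

lemma emeasure_UN_countable_le:
  assumes I: "countable I" and X: "\<And>i. i \<in> I \<Longrightarrow> X i \<in> sets M"
  shows "emeasure M (\<Union>(X ` I)) \<le> (\<integral>\<^sup>+i. emeasure M (X i) \<partial>count_space I)"
proof -
  have UN: "\<Union>(X ` I) \<in> sets M"
    using X I by (intro sets.countable_UN') auto
  have le: "indicator (\<Union>(X ` I)) x \<le> (\<integral>\<^sup>+ i. indicator (X i) x \<partial>count_space I)" for x
  proof (cases "x \<in> \<Union>(X ` I)")
    case True
    then obtain j where j: "j \<in> I" "x \<in> X j"
      by auto
    have "(\<integral>\<^sup>+ i. indicator {j} i \<partial>count_space I) \<le> (\<integral>\<^sup>+ i. indicator (X i) x \<partial>count_space I)"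
      by (intro nn_integral_mono) (auto simp: indicator_def j)
    moreover have "(\<integral>\<^sup>+ i. indicator {j} i \<partial>count_space I) = (1::ennreal)"
      using j by (simp add: nn_integral_indicator)
    ultimately show ?thesis
      using True by simp
  qed simp
  have "emeasure M (\<Union>(X ` I)) = (\<integral>\<^sup>+x. indicator (\<Union>(X ` I)) x \<partial>M)"
    using UN by simp
  also have "\<dots> \<le> (\<integral>\<^sup>+x. \<integral>\<^sup>+ i. indicator (X i) x \<partial>count_space I \<partial>M)"
    by (intro nn_integral_mono le)
  also have "\<dots> = (\<integral>\<^sup>+i. \<integral>\<^sup>+x. indicator (X i) x \<partial>M \<partial>count_space I)"
    using X I by (intro nn_integral_count_space_nn_integral) auto
  also have "\<dots> = (\<integral>\<^sup>+i. emeasure M (X i) \<partial>count_space I)"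
    using X by (intro nn_integral_cong) auto
  finally show ?thesis .
qed

lemma measurable_envelope:
  fixes m :: "'a measure"
  assumes F: "F \<in> sets m" "emeasure m F < \<infinity>" and S: "S \<subseteq> F"
  obtains T where "T \<in> sets m" "S \<subseteq> T" "T \<subseteq> F"
    "\<And>A. A \<in> sets m \<Longrightarrow> S \<subseteq> A \<Longrightarrow> emeasure m T \<le> emeasure m A"
proof -
  define \<A> where "\<A> = {A. A \<in> sets m \<and> S \<subseteq> A \<and> A \<subseteq> F}"
  define h where "h = (INF A\<in>\<A>. emeasure m A)"
  have F\<A>: "F \<in> \<A>"
    using F S by (auto simp: \<A>_def)
  have hfin: "h < \<infinity>"
    unfolding h_def using F\<A> F(2) by (meson INF_lower le_less_trans)
  have "\<exists>A. A \<in> \<A> \<and> emeasure m A < h + ennreal (1 / Suc n)" for n :: nat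
  proof -
    obtain a where a: "h = ennreal a" "0 \<le> a"
      using hfin by (cases h rule: ennreal_cases) auto
    have "h < h + ennreal (1 / Suc n)"
      using a by (simp flip: ennreal_plus add: ennreal_less_iff add_pos_pos)
    then show ?thesis
      unfolding h_def by (auto simp: INF_less_iff)
  qed
  then obtain A where A: "\<And>n. A n \<in> \<A>" "\<And>n. emeasure m (A n) < h + ennreal (1 / Suc n)"
    by metis
  define T where "T = (\<Inter>n. A n)"
  have Tm: "T \<in> sets m"
    using A(1) unfolding T_def \<A>_def by auto
  have ST: "S \<subseteq> T" "T \<subseteq> F"
    using A(1) unfolding T_def \<A>_def by blast+
  have Th: "emeasure m T \<le> h"
  proof (rule ennreal_le_epsilon)
    fix e :: real assume "0 < e"
    then obtain n :: nat where n: "1 / Suc n < e"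
      by (rule nat_approx_posE)
    have "emeasure m T \<le> emeasure m (A n)"
      using A(1) by (intro emeasure_mono) (auto simp: T_def \<A>_def)
    also have "\<dots> \<le> h + ennreal (1 / Suc n)"
      using A(2)[of n] by simp
    also have "\<dots> \<le> h + ennreal e"
      using n by (intro add_left_mono ennreal_leI) simp
    finally show "emeasure m T \<le> h + ennreal e" .
  qed
  show thesis
  proof (rule that[OF Tm ST])
    fix B assume B: "B \<in> sets m" "S \<subseteq> B"
    have "B \<inter> T \<in> \<A>"
      using B Tm ST by (auto simp: \<A>_def)
    then have "h \<le> emeasure m (B \<inter> T)"
      unfolding h_def by (rule INF_lower)
    also have "\<dots> \<le> emeasure m B"
      using B by (intro emeasure_mono) auto
    finally show "emeasure m T \<le> emeasure m B"
      using Th by simp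
  qed
qed

lemma emeasure_le_mult_iff_measure:
  assumes "emeasure M A < \<infinity>" and "emeasure M B < \<infinity>" and "0 \<le> c"
  shows "emeasure M A \<le> ennreal c * emeasure M B \<longleftrightarrow> measure M A \<le> c * measure M B"
  using assms by (simp add: emeasure_eq_ennreal_measure ennreal_mult[symmetric] ennreal_le_iff less_top)

lemma ennreal_le_divide_if_le_mult_add:
  fixes p :: ennreal
  assumes "p \<noteq> \<infinity>" and "0 \<le> \<theta>" "\<theta> < 1" and "0 \<le> \<eta>"
    and "p \<le> ennreal \<theta> * p + ennreal \<eta>"
  shows "p \<le> ennreal (\<eta> / (1 - \<theta>))"
proof -
  obtain q where q: "p = ennreal q" "0 \<le> q"
    using assms(1) by (cases p rule: ennreal_cases) auto
  then have "q \<le> \<theta> * q + \<eta>"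
    using assms by (simp flip: ennreal_mult ennreal_plus add: ennreal_le_iff)
  then have "q \<le> \<eta> / (1 - \<theta>)"
    using assms(3) by (simp add: field_simps)
  then show ?thesis
    using q by (simp add: ennreal_leI)
qed

lemma ennreal_eq_0_if_le_all_multiples:
  fixes x :: ennreal
  assumes "\<And>\<eta>. 0 < \<eta> \<Longrightarrow> x \<le> ennreal (C * \<eta>)"
  shows "x = 0"
proof -
  have "x \<le> 0 + ennreal e" if "0 < e" for e
  proof -
    have "x \<le> ennreal (C * (e / (\<bar>C\<bar> + 1)))"
      using that by (intro assms divide_pos_pos) auto
    also have "C * (e / (\<bar>C\<bar> + 1)) \<le> e"
    proof -
      have "C * (e / (\<bar>C\<bar> + 1)) \<le> (\<bar>C\<bar> + 1) * (e / (\<bar>C\<bar> + 1))"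
        using that by (intro mult_right_mono) auto
      then show ?thesis
        by simp
    qed
    then have "ennreal (C * (e / (\<bar>C\<bar> + 1))) \<le> ennreal e"
      by (rule ennreal_leI)
    finally show ?thesis
      by simp
  qed
  then have "x \<le> 0"
    by (rule ennreal_le_epsilon)
  then show ?thesis
    by simp
qed

lemma open_superset_small_difference:
  fixes m :: "'a::polish_space measure"
  assumes sm: "sets m = sets borel" and W: "open W" "emeasure m W < \<infinity>"
    and T: "T \<in> sets borel" "T \<subseteq> W" and \<eta>: "0 < \<eta>"
  obtains V where "open V" "T \<subseteq> V" "V \<subseteq> W" "emeasure m (V - T) \<le> ennreal \<eta>"
proof -
  \<comment> \<open>Outer regularity holds for finite measures, so apply it to the restriction of \<open>m\<close> to \<open>W\<close>.\<close>
  define mW where "mW = density m (indicator W)"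
  have mW_sets: "sets mW = sets borel"
    by (simp add: mW_def sm)
  have mW_eq: "emeasure mW A = emeasure m (W \<inter> A)" if "A \<in> sets borel" for A
    unfolding mW_def using that W(1) sm by (intro emeasure_restricted) (auto simp: borel_open)
  have "space mW = UNIV"
    using mW_sets by (metis sets_eq_imp_space_eq space_borel)
  then have "emeasure mW (space mW) \<noteq> \<infinity>"
    using mW_eq[of UNIV] W(2) by simp
  then have reg: "emeasure mW T = (INF U\<in>{U. T \<subseteq> U \<and> open U}. emeasure mW U)"
    by (rule outer_regular[OF mW_sets _ T(1)])
  have mT: "emeasure mW T = emeasure m T"
    using mW_eq[OF T(1)] T(2) by (simp add: Int_absorb1)
  have Tfin: "emeasure m T < \<infinity>"
    using T W sm by (metis borel_open emeasure_mono le_less_trans)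
  then have "emeasure m T < emeasure m T + ennreal \<eta>"
    using \<eta> by (cases "emeasure m T" rule: ennreal_cases) (auto simp flip: ennreal_plus simp: ennreal_less_iff)
  then obtain U where U: "T \<subseteq> U" "open U" "emeasure mW U < emeasure m T + ennreal \<eta>"
    unfolding mT[symmetric] reg by (auto simp: INF_less_iff)
  show thesis
  proof
    show "open (U \<inter> W)" "T \<subseteq> U \<inter> W" "U \<inter> W \<subseteq> W"
      using U W T by auto
    have UW: "U \<inter> W \<in> sets m"
      using U W sm by (auto simp: borel_open)
    have "emeasure m (U \<inter> W) = emeasure m T + emeasure m (U \<inter> W - T)"
      using UW T U sm by (subst plus_emeasure) (auto intro: arg_cong[where f = "emeasure m"])
    moreover have "emeasure m (U \<inter> W) < emeasure m T + ennreal \<eta>"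
      using U mW_eq[of U] by (simp add: borel_open Int_commute)
    ultimately show "emeasure m (U \<inter> W - T) \<le> ennreal \<eta>"
      by (auto simp: ennreal_add_left_cancel_less intro: less_imp_le)
  qed
qed

lemma Vitali_density_cover:
  fixes m :: "'a::{metric_space,second_countable_topology} measure"
  assumes sm: "sets m = sets borel" and E: "E \<in> sets m"
    and rad: "\<And>x. x \<in> S \<Longrightarrow> 0 < rad x \<and> rad x \<le> \<delta>"
    and doubling: "\<And>x. x \<in> S \<Longrightarrow>
      emeasure m (cball x (5 * rad x)) \<le> ennreal N * emeasure m (cball x (rad x))"
    and sparse: "\<And>x. x \<in> S \<Longrightarrow>
      emeasure m (cball x (rad x) \<inter> E) \<le> ennreal \<theta> * emeasure m (cball x (rad x))"
  obtains U P where "U \<in> sets m" "S \<subseteq> U" "P \<in> sets m" "P \<subseteq> (\<Union>x\<in>S. cball x (rad x))"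
    "emeasure m U \<le> ennreal N * emeasure m P"
    "emeasure m (P \<inter> E) \<le> ennreal \<theta> * emeasure m P"
proof -
  have cball_sets[simp]: "cball x r \<in> sets m" for x r
    using sm by (simp add: borel_closed)
  obtain C where C: "countable C" "C \<subseteq> S"
    and disj: "pairwise (\<lambda>x y. disjnt (cball x (rad x)) (cball y (rad y))) C"
    and cover: "S \<subseteq> (\<Union>x\<in>C. cball x (5 * rad x))"
  proof -
    have "S \<subseteq> (\<Union>x\<in>S. cball x (rad x))"
      using rad by force
    then show thesis
      using Vitali_covering_lemma_cballs_metric[where a = "\<lambda>x. x"] rad that by blast
  qed
  define P where "P = (\<Union>x\<in>C. cball x (rad x))"
  have disj_family: "disjoint_family_on (\<lambda>x. cball x (rad x)) C"
    using disj by (auto simp: disjoint_family_on_def pairwise_def disjnt_def)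
  then have disj_family_E: "disjoint_family_on (\<lambda>x. cball x (rad x) \<inter> E) C"
    by (auto simp: disjoint_family_on_def)
  have mP: "emeasure m P = (\<integral>\<^sup>+x. emeasure m (cball x (rad x)) \<partial>count_space C)"
    unfolding P_def using C(1) disj_family by (intro emeasure_UN_countable) auto
  show thesis
  proof
    show "(\<Union>x\<in>C. cball x (5 * rad x)) \<in> sets m" "P \<in> sets m"
      using C(1) by (auto simp: P_def intro: sets.countable_UN')
    show "S \<subseteq> (\<Union>x\<in>C. cball x (5 * rad x))" "P \<subseteq> (\<Union>x\<in>S. cball x (rad x))"
      using cover C(2) by (auto simp: P_def)
    have "emeasure m (\<Union>x\<in>C. cball x (5 * rad x))
        \<le> (\<integral>\<^sup>+x. emeasure m (cball x (5 * rad x)) \<partial>count_space C)"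
      using C(1) by (intro emeasure_UN_countable_le) auto
    also have "\<dots> \<le> (\<integral>\<^sup>+x. ennreal N * emeasure m (cball x (rad x)) \<partial>count_space C)"
      using C(2) doubling by (intro nn_integral_mono) auto
    also have "\<dots> = ennreal N * emeasure m P"
      by (simp add: mP nn_integral_cmult)
    finally show "emeasure m (\<Union>x\<in>C. cball x (5 * rad x)) \<le> ennreal N * emeasure m P" .
    have "emeasure m (P \<inter> E) = (\<integral>\<^sup>+x. emeasure m (cball x (rad x) \<inter> E) \<partial>count_space C)"
      unfolding P_def UN_extend_simps(4)
      using C(1) E disj_family_E by (intro emeasure_UN_countable) auto
    also have "\<dots> \<le> (\<integral>\<^sup>+x. ennreal \<theta> * emeasure m (cball x (rad x)) \<partial>count_space C)"
      using C(2) sparse by (intro nn_integral_mono) auto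
    also have "\<dots> = ennreal \<theta> * emeasure m P"
      by (simp add: mP nn_integral_cmult)
    finally show "emeasure m (P \<inter> E) \<le> ennreal \<theta> * emeasure m P" .
  qed
qed

lemma emeasure_le_divide_if_mostly_outside:
  assumes P: "P \<in> sets m" "emeasure m P < \<infinity>" and E: "E \<in> sets m"
    and inside: "emeasure m (P \<inter> E) \<le> ennreal \<theta> * emeasure m P" and \<theta>: "0 \<le> \<theta>" "\<theta> < 1"
    and outside: "emeasure m (P - E) \<le> ennreal \<eta>" and \<eta>: "0 \<le> \<eta>"
  shows "emeasure m P \<le> ennreal (\<eta> / (1 - \<theta>))"
proof (rule ennreal_le_divide_if_le_mult_add)
  have "emeasure m P = emeasure m (P \<inter> E) + emeasure m (P - E)"
    using P E by (subst plus_emeasure) (auto intro: arg_cong[where f = "emeasure m"])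
  also have "\<dots> \<le> ennreal \<theta> * emeasure m P + ennreal \<eta>"
    by (intro add_mono inside outside)
  finally show "emeasure m P \<le> ennreal \<theta> * emeasure m P + ennreal \<eta>" .
qed (use P \<theta> \<eta> in auto)

lemma low_density_radii_in_open:
  fixes m :: "'a::metric_space measure"
  assumes sm: "sets m = sets borel" and V: "open V" "S \<subseteq> V"
    and K: "5 \<le> K" and \<delta>: "0 < \<delta>"
    and good: "\<And>x b. x \<in> S \<Longrightarrow> 0 < b \<Longrightarrow> \<exists>r. 0 < r \<and> r < b \<and>
      emeasure m (cball x (K * r)) \<le> ennreal N * emeasure m (cball x r)"
    and sparse: "\<And>x r. x \<in> S \<Longrightarrow> 0 < r \<Longrightarrow> r < \<delta> \<Longrightarrow>
      emeasure m (cball x (K * r)) \<le> ennreal N * emeasure m (cball x r) \<Longrightarrow>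
      emeasure m (cball x r \<inter> E) < ennreal \<theta> * emeasure m (cball x r)"
  obtains rad where "\<And>x. x \<in> S \<Longrightarrow> 0 < rad x \<and> rad x \<le> \<delta>"
    "\<And>x. x \<in> S \<Longrightarrow> cball x (rad x) \<subseteq> V"
    "\<And>x. x \<in> S \<Longrightarrow> emeasure m (cball x (5 * rad x)) \<le> ennreal N * emeasure m (cball x (rad x))"
    "\<And>x. x \<in> S \<Longrightarrow> emeasure m (cball x (rad x) \<inter> E) \<le> ennreal \<theta> * emeasure m (cball x (rad x))"
proof -
  have "\<forall>x\<in>S. \<exists>r. (0 < r \<and> r \<le> \<delta>) \<and> cball x r \<subseteq> V \<and>
      emeasure m (cball x (5 * r)) \<le> ennreal N * emeasure m (cball x r) \<and>
      emeasure m (cball x r \<inter> E) \<le> ennreal \<theta> * emeasure m (cball x r)"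
  proof
    fix x assume x: "x \<in> S"
    obtain e where e: "0 < e" "ball x e \<subseteq> V"
      using x V open_contains_ball by blast
    obtain r where r: "0 < r" "r < min e \<delta>"
      and doubling: "emeasure m (cball x (K * r)) \<le> ennreal N * emeasure m (cball x r)"
      using good[OF x, of "min e \<delta>"] e \<delta> by auto
    have "emeasure m (cball x (5 * r)) \<le> emeasure m (cball x (K * r))"
      using r K sm by (intro emeasure_mono subset_cball) (auto simp: borel_closed)
    moreover have "cball x r \<subseteq> V"
      using r e by (auto simp: subset_eq)
    moreover have "emeasure m (cball x r \<inter> E) \<le> ennreal \<theta> * emeasure m (cball x r)"
      using sparse[OF x r(1) _ doubling] r by simp
    ultimately show "\<exists>r. (0 < r \<and> r \<le> \<delta>) \<and> cball x r \<subseteq> V \<and>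
        emeasure m (cball x (5 * r)) \<le> ennreal N * emeasure m (cball x r) \<and>
        emeasure m (cball x r \<inter> E) \<le> ennreal \<theta> * emeasure m (cball x r)"
      using r doubling by (intro exI[of _ r]) auto
  qed
  then obtain rad where "\<forall>x\<in>S. (0 < rad x \<and> rad x \<le> \<delta>) \<and> cball x (rad x) \<subseteq> V \<and>
      emeasure m (cball x (5 * rad x)) \<le> ennreal N * emeasure m (cball x (rad x)) \<and>
      emeasure m (cball x (rad x) \<inter> E) \<le> ennreal \<theta> * emeasure m (cball x (rad x))"
    by (rule bchoice[elim_format]) blast
  then show thesis
    using that by blast
qed

lemma low_density_set_null:
  fixes m :: "'a::polish_space measure"
  assumes sm: "sets m = sets borel" and W: "open W" "emeasure m W < \<infinity>"
    and E: "E \<in> sets borel" and S: "S \<subseteq> E \<inter> W"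
    and K: "5 \<le> K" and N: "0 \<le> N" and \<theta>: "0 \<le> \<theta>" "\<theta> < 1" and \<delta>: "0 < \<delta>"
    and good: "\<And>x b. x \<in> S \<Longrightarrow> 0 < b \<Longrightarrow> \<exists>r. 0 < r \<and> r < b \<and>
      emeasure m (cball x (K * r)) \<le> ennreal N * emeasure m (cball x r)"
    and sparse: "\<And>x r. x \<in> S \<Longrightarrow> 0 < r \<Longrightarrow> r < \<delta> \<Longrightarrow>
      emeasure m (cball x (K * r)) \<le> ennreal N * emeasure m (cball x r) \<Longrightarrow>
      emeasure m (cball x r \<inter> E) < ennreal \<theta> * emeasure m (cball x r)"
  shows "\<exists>T\<in>null_sets m. S \<subseteq> T"
proof -
  have EW: "E \<inter> W \<in> sets m" "emeasure m (E \<inter> W) < \<infinity>"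
    using E W sm by (auto simp: borel_open intro: le_less_trans[OF emeasure_mono])
  obtain T where T: "T \<in> sets m" "S \<subseteq> T" "T \<subseteq> E \<inter> W"
    and envelope: "\<And>A. A \<in> sets m \<Longrightarrow> S \<subseteq> A \<Longrightarrow> emeasure m T \<le> emeasure m A"
    using measurable_envelope[OF EW S] by blast
  \<comment> \<open>Vitali balls inside an open \<open>V \<supseteq> T\<close> with \<open>m (V - T) \<le> \<eta>\<close> carry at least \<open>1 - \<theta>\<close> of their
      mass outside \<open>E \<supseteq> T\<close>, so their total mass is at most \<open>\<eta> / (1 - \<theta>)\<close>.\<close>
  have "emeasure m T \<le> ennreal (N / (1 - \<theta>) * \<eta>)" if \<eta>: "0 < \<eta>" for \<eta>
  proof -
    obtain V where V: "open V" "T \<subseteq> V" "V \<subseteq> W" and small: "emeasure m (V - T) \<le> ennreal \<eta>"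
      using open_superset_small_difference[OF sm W _ _ \<eta>] T sm by auto
    obtain rad where rad: "\<And>x. x \<in> S \<Longrightarrow> 0 < rad x \<and> rad x \<le> \<delta>"
      and inside: "\<And>x. x \<in> S \<Longrightarrow> cball x (rad x) \<subseteq> V"
      and doubling: "\<And>x. x \<in> S \<Longrightarrow>
        emeasure m (cball x (5 * rad x)) \<le> ennreal N * emeasure m (cball x (rad x))"
      and sparse: "\<And>x. x \<in> S \<Longrightarrow>
        emeasure m (cball x (rad x) \<inter> E) \<le> ennreal \<theta> * emeasure m (cball x (rad x))"
      using low_density_radii_in_open[OF sm V(1) order.trans[OF T(2) V(2)] K \<delta> good sparse] by blast
    obtain U P where U: "U \<in> sets m" "S \<subseteq> U" and P: "P \<in> sets m" "P \<subseteq> (\<Union>x\<in>S. cball x (rad x))"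
      and mU: "emeasure m U \<le> ennreal N * emeasure m P"
      and mPE: "emeasure m (P \<inter> E) \<le> ennreal \<theta> * emeasure m P"
      using Vitali_density_cover[OF sm _ rad doubling sparse] E sm by auto
    have "P \<subseteq> V" "V \<in> sets m" "W \<in> sets m"
      using P(2) inside V W sm by (auto simp: borel_open)
    have "emeasure m (P - E) \<le> emeasure m (V - T)"
      using \<open>P \<subseteq> V\<close> \<open>V \<in> sets m\<close> T by (intro emeasure_mono) auto
    then have outside: "emeasure m (P - E) \<le> ennreal \<eta>"
      using small by (rule order_trans)
    have "emeasure m P \<le> emeasure m W"
      using \<open>P \<subseteq> V\<close> V(3) \<open>W \<in> sets m\<close> by (intro emeasure_mono) auto
    then have "emeasure m P < \<infinity>"
      using W(2) by (rule le_less_trans)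
    then have mP: "emeasure m P \<le> ennreal (\<eta> / (1 - \<theta>))"
      using E sm \<eta> by (intro emeasure_le_divide_if_mostly_outside[OF P(1) _ _ mPE \<theta> outside]) auto
    have "emeasure m T \<le> ennreal N * emeasure m P"
      using envelope[OF U] mU by (rule order_trans)
    also have "\<dots> \<le> ennreal N * ennreal (\<eta> / (1 - \<theta>))"
      using mP by (rule mult_left_mono) simp
    also have "\<dots> = ennreal (N / (1 - \<theta>) * \<eta>)"
      using N \<theta> \<eta> by (simp flip: ennreal_mult)
    finally show ?thesis .
  qed
  then have "emeasure m T = 0"
    by (rule ennreal_eq_0_if_le_all_multiples)
  with T show ?thesis
    by blast
qed

lemma countable_open_cover_finite_measure:
  fixes m :: "'a::{metric_space,second_countable_topology} measure"
  assumes sm: "sets m = sets borel" and lf: "\<And>x. \<exists>r>0. emeasure m (cball x r) < \<infinity>"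
  obtains \<W> where "countable \<W>" "\<And>W. W \<in> \<W> \<Longrightarrow> open W \<and> emeasure m W < \<infinity>" "\<Union>\<W> = UNIV"
proof -
  define \<F> where "\<F> = {ball x r | x r. r > 0 \<and> emeasure m (cball x r) < \<infinity>}"
  have "\<And>S. S \<in> \<F> \<Longrightarrow> open S"
    by (auto simp: \<F>_def)
  then obtain \<F>' where F': "\<F>' \<subseteq> \<F>" "countable \<F>'" "\<Union>\<F>' = \<Union>\<F>"
    by (rule Lindelof)
  have "x \<in> \<Union>\<F>'" for x
  proof -
    obtain r where "r > 0" "emeasure m (cball x r) < \<infinity>"
      using lf by blast
    then show ?thesis
      unfolding F'(3) \<F>_def by (auto intro!: exI[of _ "ball x r"])
  qed
  then have "\<Union>\<F>' = UNIV"
    by blast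
  moreover have "open W \<and> emeasure m W < \<infinity>" if W_in: "W \<in> \<F>'" for W
  proof -
    obtain x r where W: "W = ball x r" "emeasure m (cball x r) < \<infinity>"
      using W_in F'(1) unfolding \<F>_def by blast
    have "emeasure m W \<le> emeasure m (cball x r)"
      using W(1) sm by (intro emeasure_mono) (auto simp: ball_subset_cball borel_closed)
    then show ?thesis
      using W by auto
  qed
  ultimately show thesis
    using that F'(2) by blast
qed

lemma AE_in_supp:
  fixes m :: "'a::{metric_space,second_countable_topology} measure"
  assumes sm: "sets m = sets borel"
  shows "AE x in m. x \<in> supp m"
proof -
  define \<F> where "\<F> = {ball x r | x r. r > 0 \<and> emeasure m (cball x r) = 0}"
  have "\<And>S. S \<in> \<F> \<Longrightarrow> open S"
    by (auto simp: \<F>_def)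
  then obtain \<F>' where F': "\<F>' \<subseteq> \<F>" "countable \<F>'" "\<Union>\<F>' = \<Union>\<F>"
    by (rule Lindelof)
  have outside: "- supp m \<subseteq> \<Union>\<F>"
  proof
    fix x assume "x \<in> - supp m"
    then obtain r where "r > 0" "emeasure m (cball x r) = 0"
      by (auto simp: supp_def)
    then show "x \<in> \<Union>\<F>"
      unfolding \<F>_def by (auto intro!: exI[of _ "ball x r"])
  qed
  have "W \<in> null_sets m" if W_in: "W \<in> \<F>'" for W
  proof -
    obtain x r where W: "W = ball x r" "emeasure m (cball x r) = 0"
      using W_in F'(1) unfolding \<F>_def by blast
    have "cball x r \<in> null_sets m"
      using W sm by (auto simp: borel_closed null_sets_def)
    then show ?thesis
      using W(1) sm by (auto intro: null_sets_subset simp: ball_subset_cball borel_open)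
  qed
  then have "\<Union>\<F>' \<in> null_sets m"
    using F'(2) null_sets_UN'[of \<F>' "\<lambda>W. W"] by simp
  then show ?thesis
    using outside F'(3) by (intro AE_I'[where N = "\<Union>\<F>'"]) auto
qed

lemma AE_notin_low_density_set:
  fixes m :: "'a::polish_space measure"
  assumes sm: "sets m = sets borel" and lf: "\<And>x. \<exists>r>0. emeasure m (cball x r) < \<infinity>"
    and E: "E \<in> sets borel" and S: "S \<subseteq> E"
    and K: "5 \<le> K" and N: "0 \<le> N" and \<theta>: "0 \<le> \<theta>" "\<theta> < 1" and \<delta>: "0 < \<delta>"
    and good: "\<And>x b. x \<in> S \<Longrightarrow> 0 < b \<Longrightarrow> \<exists>r. 0 < r \<and> r < b \<and>
      emeasure m (cball x (K * r)) \<le> ennreal N * emeasure m (cball x r)"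
    and sparse: "\<And>x r. x \<in> S \<Longrightarrow> 0 < r \<Longrightarrow> r < \<delta> \<Longrightarrow>
      emeasure m (cball x (K * r)) \<le> ennreal N * emeasure m (cball x r) \<Longrightarrow>
      emeasure m (cball x r \<inter> E) < ennreal \<theta> * emeasure m (cball x r)"
  shows "AE x in m. x \<notin> S"
proof -
  obtain \<W> where \<W>: "countable \<W>" "\<And>W. W \<in> \<W> \<Longrightarrow> open W \<and> emeasure m W < \<infinity>" "\<Union>\<W> = UNIV"
    using countable_open_cover_finite_measure[OF sm lf] by blast
  have "AE x in m. x \<notin> S \<inter> W" if "W \<in> \<W>" for W
  proof -
    have "\<exists>T\<in>null_sets m. S \<inter> W \<subseteq> T"
      using \<W>(2)[OF that] S
      by (intro low_density_set_null[OF sm _ _ E _ K N \<theta> \<delta>] good sparse) auto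
    then show ?thesis
      by (auto intro: AE_I')
  qed
  then have "AE x in m. \<forall>W\<in>\<W>. x \<notin> S \<inter> W"
    using \<W>(1) by (subst AE_ball_countable) auto
  then show ?thesis
    by (rule eventually_mono) (use \<W>(3) in blast)
qed

section \<open>Finiteness of \<open>lower_C\<close>\<close>

definition lower_C_at :: "'a::metric_space measure \<Rightarrow> real \<Rightarrow> real \<Rightarrow> ereal" where
  "lower_C_at m c R = (SUP x\<in>supp m. INF r\<in>{0<..R}.
     ereal (measure m (cball x (c * r)) / measure m (cball x r)))"

lemma lower_C_at_antimono: "0 < R \<Longrightarrow> R \<le> R' \<Longrightarrow> lower_C_at m c R' \<le> lower_C_at m c R"
  unfolding lower_C_at_def by (intro SUP_mono' INF_superset_mono) auto

lemma lower_C_eq_SUP: "lower_C m c = (SUP R\<in>{0<..}. lower_C_at m c R)"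
proof -
  have "(lower_C_at m c \<longlongrightarrow> (SUP R\<in>{0<..}. lower_C_at m c R)) (at_right 0)"
  proof (rule increasing_tendsto)
    show "\<forall>\<^sub>F R in at_right 0. lower_C_at m c R \<le> (SUP R\<in>{0<..}. lower_C_at m c R)"
      unfolding eventually_at_right_field by (intro exI[of _ 1]) (auto intro: SUP_upper)
    fix y assume "y < (SUP R\<in>{0<..}. lower_C_at m c R)"
    then obtain R0 where "0 < R0" "y < lower_C_at m c R0"
      by (auto simp: less_SUP_iff)
    then show "\<forall>\<^sub>F R in at_right 0. y < lower_C_at m c R"
      unfolding eventually_at_right_field
      by (intro exI[of _ R0]) (auto intro: less_le_trans[OF _ lower_C_at_antimono])
  qed
  then show ?thesis
    unfolding lower_C_def lower_C_at_def[symmetric] by (intro tendsto_Lim) auto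
qed

lemma INF_ratio_le_lower_C:
  assumes "x \<in> supp m" and "0 < R"
  shows "(INF r\<in>{0<..R}. ereal (measure m (cball x (c * r)) / measure m (cball x r))) \<le> lower_C m c"
proof -
  have "(INF r\<in>{0<..R}. ereal (measure m (cball x (c * r)) / measure m (cball x r)))
      \<le> lower_C_at m c R"
    unfolding lower_C_at_def using assms(1) by (rule SUP_upper)
  also have "\<dots> \<le> lower_C m c"
    unfolding lower_C_eq_SUP using assms(2) by (intro SUP_upper) auto
  finally show ?thesis .
qed

lemma emeasure_cball_finite_mono:
  assumes "sets m = sets borel" and "r \<le> s" and "emeasure m (cball x s) < \<infinity>"
  shows "emeasure m (cball x r) < \<infinity>"
proof -
  have "emeasure m (cball x r) \<le> emeasure m (cball x s)"
    using assms by (intro emeasure_mono subset_cball) (auto simp: borel_closed)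
  then show ?thesis
    using assms(3) by (rule le_less_trans)
qed

lemma measure_cball_pos:
  assumes "x \<in> supp m" and "0 < r" and "emeasure m (cball x r) < \<infinity>"
  shows "0 < measure m (cball x r)"
  using assms by (auto simp: supp_def measure_def enn2real_positive_iff less_top)

lemma measure_cball_mono:
  assumes "sets m = sets borel" and "r \<le> s" and "emeasure m (cball x s) < \<infinity>"
  shows "measure m (cball x r) \<le> measure m (cball x s)"
  using assms by (intro measure_mono_fmeasurable subset_cball) (auto simp: fmeasurable_def borel_closed less_top)

lemma lower_C_ge_1:
  assumes sm: "sets m = sets borel" and x: "x \<in> supp m" and K: "1 \<le> K"
    and \<rho>: "0 < \<rho>" "emeasure m (cball x \<rho>) < \<infinity>"
  shows "1 \<le> lower_C m K"
proof -
  have "1 \<le> (INF r\<in>{0<..\<rho> / K}. ereal (measure m (cball x (K * r)) / measure m (cball x r)))"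
  proof (rule INF_greatest)
    fix r assume "r \<in> {0<..\<rho> / K}"
    then have r: "0 < r" "r \<le> K * r" "K * r \<le> \<rho>"
      using K by (auto simp: field_simps)
    have fin: "emeasure m (cball x (K * r)) < \<infinity>"
      by (rule emeasure_cball_finite_mono[OF sm r(3) \<rho>(2)])
    then have "emeasure m (cball x r) < \<infinity>"
      by (rule emeasure_cball_finite_mono[OF sm r(2)])
    then have "0 < measure m (cball x r)"
      using x r by (intro measure_cball_pos) auto
    moreover have "measure m (cball x r) \<le> measure m (cball x (K * r))"
      by (rule measure_cball_mono[OF sm r(2) fin])
    ultimately show "1 \<le> ereal (measure m (cball x (K * r)) / measure m (cball x r))"
      by simp
  qed
  also have "\<dots> \<le> lower_C m K"
    using x \<rho> K by (intro INF_ratio_le_lower_C) auto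
  finally show ?thesis .
qed

lemma unif_loc_doubling_scale:
  fixes \<mu> :: "'a::metric_space measure"
  assumes dbl: "unif_loc_doubling \<mu>" and sm: "sets \<mu> = sets borel"
  obtains D where "1 \<le> D"
    "\<And>y r. 0 < r \<Longrightarrow> r \<le> 1 \<Longrightarrow> emeasure \<mu> (cball y (K * r)) \<le> ennreal D * emeasure \<mu> (cball y r)"
proof -
  obtain p :: nat where p: "K < 2 ^ p"
    using real_arch_pow[of 2 K] by auto
  obtain C where C: "\<And>r y. r \<in> {0<..2 ^ p} \<Longrightarrow>
      emeasure \<mu> (cball y (2 * r)) \<le> ennreal C * emeasure \<mu> (cball y r)"
    using dbl unfolding unif_loc_doubling_def by (metis zero_less_numeral zero_less_power)
  define D where "D = max C 1"
  have D: "1 \<le> D" "ennreal C \<le> ennreal D"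
    by (auto simp: D_def intro: ennreal_leI)
  have iterate: "emeasure \<mu> (cball y (2 ^ i * r)) \<le> ennreal (D ^ i) * emeasure \<mu> (cball y r)"
    if "i \<le> p" "0 < r" "r \<le> 1" for i y r
    using that(1)
  proof (induction i)
    case (Suc i)
    have "2 ^ i * r \<le> 2 ^ p * (1::real)"
      using Suc.prems that by (intro mult_mono power_increasing) auto
    then have "emeasure \<mu> (cball y (2 ^ Suc i * r)) \<le> ennreal C * emeasure \<mu> (cball y (2 ^ i * r))"
      using C[of "2 ^ i * r" y] that by (simp add: mult.assoc)
    also have "\<dots> \<le> ennreal D * (ennreal (D ^ i) * emeasure \<mu> (cball y r))"
      using Suc by (intro mult_mono D(2)) auto
    also have "\<dots> = ennreal (D ^ Suc i) * emeasure \<mu> (cball y r)"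
      using D(1) by (simp add: ennreal_mult mult.assoc)
    finally show ?case .
  qed simp
  show thesis
  proof
    show "1 \<le> D ^ p"
      using D(1) by simp
    fix y and r :: real assume r: "0 < r" "r \<le> 1"
    have "emeasure \<mu> (cball y (K * r)) \<le> emeasure \<mu> (cball y (2 ^ p * r))"
      using p r sm by (intro emeasure_mono subset_cball mult_right_mono) (auto simp: borel_closed)
    also have "\<dots> \<le> ennreal (D ^ p) * emeasure \<mu> (cball y r)"
      using iterate r by simp
    finally show "emeasure \<mu> (cball y (K * r)) \<le> ennreal (D ^ p) * emeasure \<mu> (cball y r)" .
  qed
qed

lemma geometric_growth:
  fixes \<phi> :: "real \<Rightarrow> real"
  assumes K: "1 \<le> K" and q: "0 \<le> q"
    and grow: "\<And>r. 0 < r \<Longrightarrow> K * r \<le> R \<Longrightarrow> q * \<phi> r \<le> \<phi> (K * r)"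
    and R: "0 < R"
  shows "q ^ j * \<phi> (R / K ^ j) \<le> \<phi> R"
proof (induction j)
  case (Suc j)
  have K_step: "K * (R / K ^ Suc j) = R / K ^ j"
    using K by simp
  have "R / K ^ j \<le> R"
    using K R by (simp add: divide_le_eq one_le_power mult_le_cancel_left1)
  then have "q * \<phi> (R / K ^ Suc j) \<le> \<phi> (R / K ^ j)"
    using grow[of "R / K ^ Suc j"] K R K_step by simp
  then have "q ^ j * (q * \<phi> (R / K ^ Suc j)) \<le> q ^ j * \<phi> (R / K ^ j)"
    using q by (intro mult_left_mono) auto
  also have "\<dots> \<le> \<phi> R"
    by (rule Suc.IH)
  finally show ?case
    by (simp only: power_Suc2 mult.assoc)
qed simp

lemma doubling_function_not_eventually_above:
  fixes \<phi> :: "real \<Rightarrow> real"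
  assumes K: "1 < K" and R: "0 < R" and \<delta>: "0 < \<delta>"
    and doubling: "\<And>r. 0 < r \<Longrightarrow> K * r \<le> R \<Longrightarrow> 2 * \<phi> r \<le> \<phi> (K * r)"
  shows "\<not> (\<forall>\<^sub>F r in at_right 0. \<delta> < \<phi> r)"
proof
  assume above: "\<forall>\<^sub>F r in at_right 0. \<delta> < \<phi> r"
  have decay: "2 ^ j * \<phi> (R / K ^ j) \<le> \<phi> R" for j
    using K R doubling by (intro geometric_growth) auto
  have "filterlim (\<lambda>j. R / K ^ j) (at_right 0) sequentially"
    using K R by (intro tendsto_imp_filterlim_at_right LIMSEQ_divide_realpow_zero) auto
  then have "\<forall>\<^sub>F j in sequentially. \<delta> < \<phi> (R / K ^ j)"
    using above by (rule eventually_compose_filterlim[rotated])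
  moreover have "\<forall>\<^sub>F j in sequentially. \<phi> R / \<delta> < 2 ^ j"
  proof -
    obtain j0 :: nat where "\<phi> R / \<delta> < 2 ^ j0"
      using real_arch_pow[of 2 "\<phi> R / \<delta>"] by auto
    then have "\<phi> R / \<delta> < 2 ^ j" if "j0 \<le> j" for j
      using power_increasing[OF that, of "2::real"] by linarith
    then show ?thesis
      unfolding eventually_sequentially by blast
  qed
  ultimately obtain j where "\<delta> < \<phi> (R / K ^ j)" "\<phi> R / \<delta> < 2 ^ j"
    by (auto dest: eventually_happens'[OF sequentially_bot eventually_conj])
  then have "2 ^ j * \<delta> < 2 ^ j * \<phi> (R / K ^ j)"
    by (intro mult_strict_left_mono) auto
  then have "2 ^ j * \<delta> < \<phi> R"
    using decay[of j] by linarith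
  moreover have "\<phi> R < 2 ^ j * \<delta>"
    using \<open>\<phi> R / \<delta> < 2 ^ j\<close> \<delta> by (simp add: divide_less_eq)
  ultimately show False
    by simp
qed

text \<open>If the ratio \<open>m(B(x,Kr)) / m(B(x,r))\<close> exceeded \<open>2D\<close> on a whole interval \<open>(0,R]\<close>, then
  \<open>m(B(x,r)) / \<mu>(B(x,r))\<close> would at least double from each scale \<open>r\<close> to \<open>Kr\<close>, and therefore tend to 0.\<close>

lemma INF_ratio_le_if_noncollapsed:
  fixes \<mu> m :: "'a::metric_space measure"
  assumes \<mu>: "\<And>y r. 0 < r \<Longrightarrow> 0 < emeasure \<mu> (cball y r) \<and> emeasure \<mu> (cball y r) < \<infinity>"
    and D: "1 \<le> D"
      "\<And>y r. 0 < r \<Longrightarrow> r \<le> 1 \<Longrightarrow> emeasure \<mu> (cball y (K * r)) \<le> ennreal D * emeasure \<mu> (cball y r)"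
    and K: "1 < K"
    and noncollapsed: "\<forall>\<^sub>F r in at_right 0. \<delta> < measure m (cball x r) / measure \<mu> (cball x r)"
    and \<delta>: "0 < \<delta>" and R: "0 < R" "R \<le> 1"
  shows "(INF r\<in>{0<..R}. ereal (measure m (cball x (K * r)) / measure m (cball x r))) \<le> ereal (2 * D)"
proof (rule ccontr)
  define \<phi> where "\<phi> r = measure m (cball x r) / measure \<mu> (cball x r)" for r
  assume too_big: "\<not> ?thesis"
  have big: "2 * D * measure m (cball x r) < measure m (cball x (K * r))"
    if "0 < r" "r \<le> R" for r
  proof -
    have "ereal (2 * D) < (INF r\<in>{0<..R}. ereal (measure m (cball x (K * r)) / measure m (cball x r)))"
      using too_big by simp
    also have "\<dots> \<le> ereal (measure m (cball x (K * r)) / measure m (cball x r))"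
      using that by (intro INF_lower) auto
    finally have ratio: "2 * D < measure m (cball x (K * r)) / measure m (cball x r)"
      by simp
    \<comment> \<open>A null denominator would make the ratio \<open>0\<close>.\<close>
    then have "0 < measure m (cball x r)"
      using D(1) by (cases "measure m (cball x r) = 0") (auto simp: zero_less_measure_iff)
    with ratio show ?thesis
      by (simp add: pos_less_divide_eq)
  qed
  have \<mu>_pos: "0 < measure \<mu> (cball y r)" if "0 < r" for y r
    using \<mu>[OF that, of y] by (simp add: measure_def enn2real_positive_iff)
  have \<mu>_doubling: "measure \<mu> (cball x (K * r)) \<le> D * measure \<mu> (cball x r)" if "0 < r" "r \<le> 1" for r
    using D(2)[OF that, of x] \<mu>[OF that(1), of x] \<mu>[of "K * r" x] that K D(1)
    by (subst (asm) emeasure_le_mult_iff_measure) auto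
  have "2 * \<phi> r \<le> \<phi> (K * r)" if r: "0 < r" "K * r \<le> R" for r
  proof -
    have "r \<le> R" "r \<le> 1"
      using r K R by (auto intro: order_trans[of r "K * r"])
    have "2 * \<phi> r = 2 * D * measure m (cball x r) / (D * measure \<mu> (cball x r))"
      using D(1) by (simp add: \<phi>_def)
    also have "\<dots> \<le> measure m (cball x (K * r)) / (D * measure \<mu> (cball x r))"
      using big[OF r(1) \<open>r \<le> R\<close>] \<mu>_pos[OF r(1)] D(1) by (intro divide_right_mono) auto
    also have "\<dots> \<le> \<phi> (K * r)"
      unfolding \<phi>_def using \<mu>_doubling[OF r(1) \<open>r \<le> 1\<close>] \<mu>_pos[of "K * r" x] \<mu>_pos[OF r(1), of x] r K D(1)
      by (intro divide_left_mono) auto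
    finally show ?thesis .
  qed
  then have "\<not> (\<forall>\<^sub>F r in at_right 0. \<delta> < \<phi> r)"
    by (rule doubling_function_not_eventually_above[OF K R(1) \<delta>])
  with noncollapsed show False
    by (simp add: \<phi>_def)
qed

lemma lower_C_finite:
  fixes \<mu> m :: "'a::polish_space measure"
  assumes "mms \<mu>" and dbl: "unif_loc_doubling \<mu>" and wnc: "weakly_noncollapsed \<mu> m" and K: "1 < K"
  shows "lower_C m K < \<infinity>"
proof -
  have \<mu>: "sets \<mu> = sets borel"
    "\<And>y r. 0 < r \<Longrightarrow> 0 < emeasure \<mu> (cball y r) \<and> emeasure \<mu> (cball y r) < \<infinity>"
    using \<open>mms \<mu>\<close> by (auto simp: mms_def)
  obtain D where D: "1 \<le> D"
    "\<And>y r. 0 < r \<Longrightarrow> r \<le> 1 \<Longrightarrow> emeasure \<mu> (cball y (K * r)) \<le> ennreal D * emeasure \<mu> (cball y r)"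
    using unif_loc_doubling_scale[OF dbl \<mu>(1)] by blast
  have "0 < (INF x\<in>supp m. Liminf (at_right 0)
      (\<lambda>r. ereal (measure m (cball x r) / measure \<mu> (cball x r))))"
    using wnc unfolding weakly_noncollapsed_def .
  then obtain \<delta> where "0 < ereal \<delta>" and \<delta>_less: "ereal \<delta> < (INF x\<in>supp m. Liminf (at_right 0)
      (\<lambda>r. ereal (measure m (cball x r) / measure \<mu> (cball x r))))"
    using ereal_dense2 by blast
  then have \<delta>: "0 < \<delta>"
    by simp
  have small_scales: "lower_C_at m K R \<le> ereal (2 * D)" if R: "0 < R" "R \<le> 1" for R
    unfolding lower_C_at_def
  proof (rule SUP_least)
    fix x assume "x \<in> supp m"
    then have "ereal \<delta> < Liminf (at_right 0) (\<lambda>r. ereal (measure m (cball x r) / measure \<mu> (cball x r)))"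
      by (rule less_le_trans[OF \<delta>_less INF_lower])
    then have ev: "\<forall>\<^sub>F r in at_right 0. \<delta> < measure m (cball x r) / measure \<mu> (cball x r)"
      by (auto dest: less_LiminfD)
    then show "(INF r\<in>{0<..R}. ereal (measure m (cball x (K * r)) / measure m (cball x r))) \<le> ereal (2 * D)"
      using INF_ratio_le_if_noncollapsed[OF \<mu>(2) D K ev \<delta> R] by simp
  qed
  have "lower_C m K \<le> ereal (2 * D)"
    unfolding lower_C_eq_SUP
  proof (rule SUP_least)
    fix R :: real assume "R \<in> {0<..}"
    then have "lower_C_at m K R \<le> lower_C_at m K (min R 1)"
      by (intro lower_C_at_antimono) auto
    also have "\<dots> \<le> ereal (2 * D)"
      using \<open>R \<in> {0<..}\<close> by (intro small_scales) auto
    finally show "lower_C_at m K R \<le> ereal (2 * D)" .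
  qed
  then show ?thesis
    by (rule le_less_trans) simp
qed

section \<open>Sequences of good radii\<close>

lemma radius_with_ratio_below:
  fixes m :: "'a::metric_space measure"
  assumes sm: "sets m = sets borel" and x: "x \<in> supp m" and K: "1 \<le> K"
    and \<rho>: "0 < \<rho>" "emeasure m (cball x \<rho>) < \<infinity>"
    and less: "lower_C m K < ereal M" and b: "0 < b"
  obtains r where "0 < r" "r < b" "K * r \<le> \<rho>"
    "emeasure m (cball x (K * r)) \<le> ennreal M * emeasure m (cball x r)"
proof -
  define R where "R = min (b / 2) (\<rho> / K)"
  have R: "0 < R" "R < b" "K * R \<le> \<rho>"
    using \<rho> K b by (auto simp: R_def field_simps min_def)
  have "(INF r\<in>{0<..R}. ereal (measure m (cball x (K * r)) / measure m (cball x r))) < ereal M"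
    using INF_ratio_le_lower_C[OF x R(1)] less by (rule le_less_trans)
  then obtain r where r: "0 < r" "r \<le> R"
    and ratio: "measure m (cball x (K * r)) / measure m (cball x r) < M"
    by (auto simp: INF_less_iff)
  have "K * r \<le> K * R"
    using r K by (intro mult_left_mono) auto
  with R(3) have Kr: "K * r \<le> \<rho>"
    by linarith
  have fin: "emeasure m (cball x (K * r)) < \<infinity>"
    by (rule emeasure_cball_finite_mono[OF sm Kr \<rho>(2)])
  moreover have "r \<le> K * r"
    using K r by simp
  ultimately have fin: "emeasure m (cball x (K * r)) < \<infinity>" "emeasure m (cball x r) < \<infinity>"
    using emeasure_cball_finite_mono[OF sm] by auto
  have pos: "0 < measure m (cball x r)"
    by (rule measure_cball_pos[OF x r(1) fin(2)])
  then have "measure m (cball x (K * r)) \<le> M * measure m (cball x r)"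
    using ratio by (simp add: divide_less_eq less_imp_le)
  moreover have "0 \<le> M"
    using ratio divide_nonneg_nonneg[OF measure_nonneg measure_nonneg, of m "cball x (K * r)" m "cball x r"]
    by linarith
  ultimately show thesis
    using that r R Kr fin by (simp add: emeasure_le_mult_iff_measure)
qed

lemma measure_bounds_at_radius:
  fixes m :: "'a::metric_space measure"
  assumes sm: "sets m = sets borel" and E: "E \<in> sets m" and x: "x \<in> supp m" and r: "0 < r"
    and K: "1 \<le> K" and fin: "emeasure m (cball x (K * r)) < \<infinity>" and M: "0 \<le> M" and \<theta>: "0 \<le> \<theta>"
    and doubling: "emeasure m (cball x (K * r)) \<le> ennreal M * emeasure m (cball x r)"
    and dense: "ennreal \<theta> * emeasure m (cball x r) \<le> emeasure m (cball x r \<inter> E)"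
  shows "0 < measure m (cball x r)"
    and "\<And>c. c \<le> K \<Longrightarrow> measure m (cball x (c * r)) \<le> M * measure m (cball x r)"
    and "\<theta> * measure m (cball x r) \<le> measure m (cball x r \<inter> E)"
proof -
  have fin_r: "emeasure m (cball x r) < \<infinity>"
    using emeasure_cball_finite_mono[OF sm _ fin] K r by simp
  show "0 < measure m (cball x r)"
    by (rule measure_cball_pos[OF x r fin_r])
  show "measure m (cball x (c * r)) \<le> M * measure m (cball x r)" if "c \<le> K" for c
  proof -
    have "measure m (cball x (c * r)) \<le> measure m (cball x (K * r))"
      using that r by (intro measure_cball_mono[OF sm _ fin]) (simp add: mult_right_mono)
    also have "\<dots> \<le> M * measure m (cball x r)"
      using doubling fin fin_r M by (simp add: emeasure_le_mult_iff_measure)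
    finally show ?thesis .
  qed
  have "emeasure m (cball x r \<inter> E) < \<infinity>"
    using fin_r E sm by (auto intro: le_less_trans[OF emeasure_mono] simp: borel_closed)
  then have "ennreal \<theta> * ennreal (measure m (cball x r)) \<le> ennreal (measure m (cball x r \<inter> E))"
    using dense fin_r by (simp add: emeasure_eq_ennreal_measure less_top)
  then show "\<theta> * measure m (cball x r) \<le> measure m (cball x r \<inter> E)"
    using \<theta> by (simp flip: ennreal_mult add: ennreal_le_iff)
qed

lemma decreasing_sequence_of_witnesses:
  assumes "\<And>k b. 0 < b \<Longrightarrow> \<exists>r. 0 < r \<and> r < b \<and> P k r"
  obtains rl :: "nat \<Rightarrow> real" where "\<And>l. 0 < rl l" "decseq rl" "rl \<longlonglongrightarrow> 0" "\<And>l. P l (rl l)"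
proof -
  have "\<forall>k b. \<exists>r. 0 < b \<longrightarrow> 0 < r \<and> r < b \<and> P k r"
    using assms by blast
  then obtain w where w: "\<And>k b. 0 < b \<Longrightarrow> 0 < w k b \<and> w k b < b \<and> P k (w k b)"
    by metis
  define rl where "rl = rec_nat (w 0 1) (\<lambda>l r. w (Suc l) (min r (1 / Suc (Suc l))))"
  have rl_Suc: "rl (Suc l) = w (Suc l) (min (rl l) (1 / Suc (Suc l)))" for l
    by (simp add: rl_def)
  have rl: "0 < rl l \<and> rl l < 1 / Suc l \<and> P l (rl l)" for l
  proof (induction l)
    case 0
    show ?case
      using w[of 1 0] by (simp add: rl_def)
  next
    case (Suc l)
    then show ?case
      using w[of "min (rl l) (1 / Suc (Suc l))" "Suc l"] by (simp add: rl_Suc)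
  qed
  show thesis
  proof
    show "0 < rl l" "P l (rl l)" for l
      using rl by blast+
    have "rl (Suc l) < rl l" for l
      using w[of "min (rl l) (1 / Suc (Suc l))" "Suc l"] rl[of l] by (simp add: rl_Suc)
    then show "decseq rl"
      by (intro decseq_SucI less_imp_le)
    show "rl \<longlonglongrightarrow> 0"
    proof (rule tendsto_sandwich[of "\<lambda>_. 0" _ _ "\<lambda>l. 1 / real (Suc l)"])
      show "\<forall>\<^sub>F l in sequentially. 0 \<le> rl l" "\<forall>\<^sub>F l in sequentially. rl l \<le> 1 / real (Suc l)"
        using rl by (auto intro: always_eventually less_imp_le)
    qed (use LIMSEQ_Suc[OF lim_1_over_n] in auto)
  qed
qed

lemma limsup_ratio_le:
  assumes "\<And>l. a l \<le> (n + 1 / Suc l) * b l" and "\<And>l. 0 < b l"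
  shows "limsup (\<lambda>l. ereal (a l / b l)) \<le> ereal n"
proof -
  have "limsup (\<lambda>l. ereal (a l / b l)) \<le> limsup (\<lambda>l. ereal (n + 1 / Suc l))"
    using assms by (intro Limsup_mono always_eventually allI) (simp add: divide_le_eq)
  also have "\<dots> = ereal n"
  proof (rule lim_imp_Limsup)
    have "(\<lambda>l. n + 1 / real (Suc l)) \<longlonglongrightarrow> n + 0"
      by (intro tendsto_add tendsto_const LIMSEQ_Suc[OF lim_1_over_n])
    then show "(\<lambda>l. ereal (n + 1 / real (Suc l))) \<longlonglongrightarrow> ereal n"
      by (simp add: lim_ereal)
  qed simp
  finally show ?thesis .
qed

lemma liminf_ratio_ge:
  assumes "\<And>l. \<theta> * b l \<le> e l" and "\<And>l. 0 < b l"
  shows "ereal \<theta> \<le> liminf (\<lambda>l. ereal (e l / b l))"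
  using assms by (intro Liminf_bounded always_eventually allI) (simp add: le_divide_eq)

lemma liminf_le_Limsup_at_right_0:
  fixes f :: "real \<Rightarrow> ereal"
  assumes "\<And>l. 0 < rl l" and "rl \<longlonglongrightarrow> 0"
  shows "liminf (\<lambda>l. f (rl l)) \<le> Limsup (at_right 0) f"
proof -
  have "filterlim rl (at_right 0) sequentially"
    using assms by (intro tendsto_imp_filterlim_at_right) (auto intro: always_eventually)
  then have "filtermap rl sequentially \<le> at_right 0"
    unfolding filterlim_def .
  then have "Limsup (filtermap rl sequentially) f \<le> Limsup (at_right 0) f"
    unfolding Limsup_def by (intro INF_superset_mono) (auto simp: le_filter_def)
  moreover have "liminf (\<lambda>l. f (rl l)) \<le> limsup (\<lambda>l. f (rl l))"
    by (intro Liminf_le_Limsup) simp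
  ultimately show ?thesis
    using Limsup_filtermap_ge[of sequentially f rl] by (meson order_trans)
qed

definition good_radii ::
    "'a::metric_space measure \<Rightarrow> 'a set \<Rightarrow> real \<Rightarrow> real \<Rightarrow> real \<Rightarrow> 'a \<Rightarrow> (nat \<Rightarrow> real) \<Rightarrow> bool" where
  "good_radii m E K N \<theta> x rl \<longleftrightarrow> (\<forall>l. 0 < rl l) \<and> decseq rl \<and> rl \<longlonglongrightarrow> 0 \<and>
     (\<forall>l. 0 < measure m (cball x (rl l))) \<and>
     (\<forall>l c. c \<le> K \<longrightarrow> measure m (cball x (c * rl l)) \<le> (N + 1 / Suc l) * measure m (cball x (rl l))) \<and>
     (\<forall>l. \<theta> * measure m (cball x (rl l)) \<le> measure m (cball x (rl l) \<inter> E))"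

lemma good_radii_limsup_liminf:
  assumes "good_radii m E K N \<theta> x rl" and "c \<le> K"
  shows "limsup (\<lambda>l. ereal (measure m (cball x (c * rl l)) / measure m (cball x (rl l)))) \<le> ereal N"
    and "ereal \<theta> \<le> liminf (\<lambda>l. ereal (measure m (cball x (rl l) \<inter> E) / measure m (cball x (rl l))))"
  using assms unfolding good_radii_def
  by (auto intro!: limsup_ratio_le liminf_ratio_ge)

lemma good_radii_density_bounds:
  assumes "good_radii m E K N \<theta> x rl" and "c \<le> K"
  shows "\<exists>rl :: nat \<Rightarrow> real. (\<forall>l. rl l > 0) \<and> decseq rl \<and> rl \<longlonglongrightarrow> 0 \<and>
    limsup (\<lambda>l. ereal (measure m (cball x (c * rl l)) / measure m (cball x (rl l)))) \<le> ereal N \<and>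
    liminf (\<lambda>l. ereal (measure m (cball x (rl l) \<inter> E) / measure m (cball x (rl l)))) \<ge> ereal \<theta>"
  using good_radii_limsup_liminf[OF assms] assms(1) unfolding good_radii_def by blast

lemma good_radii_Limsup_pos:
  assumes "good_radii m E K N \<theta> x rl" and "0 < \<theta>"
  shows "0 < Limsup (at_right 0) (\<lambda>r. ereal (measure m (cball x r \<inter> E) / measure m (cball x r)))"
proof -
  have "0 < ereal \<theta>"
    using assms(2) by simp
  also have "\<dots> \<le> liminf (\<lambda>l. ereal (measure m (cball x (rl l) \<inter> E) / measure m (cball x (rl l))))"
    using assms(1) order.refl by (rule good_radii_limsup_liminf)
  also have "\<dots> \<le> Limsup (at_right 0) (\<lambda>r. ereal (measure m (cball x r \<inter> E) / measure m (cball x r)))"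
    using assms(1) by (intro liminf_le_Limsup_at_right_0) (auto simp: good_radii_def)
  finally show ?thesis .
qed

lemma good_radii_exist:
  fixes m :: "'a::metric_space measure"
  assumes sm: "sets m = sets borel" and E: "E \<in> sets m" and x: "x \<in> supp m"
    and \<rho>: "0 < \<rho>" "emeasure m (cball x \<rho>) < \<infinity>" and K: "1 \<le> K" and N: "0 \<le> N" and \<theta>: "0 \<le> \<theta>"
    and radii: "\<And>k j. \<exists>r. 0 < r \<and> r < 1 / Suc j \<and>
      emeasure m (cball x (K * r)) \<le> ennreal (N + 1 / Suc k) * emeasure m (cball x r) \<and>
      ennreal \<theta> * emeasure m (cball x r) \<le> emeasure m (cball x r \<inter> E)"
  shows "\<exists>rl. good_radii m E K N \<theta> x rl"
proof -
  define good_at where "good_at l r \<longleftrightarrow> K * r \<le> \<rho> \<and>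
      emeasure m (cball x (K * r)) \<le> ennreal (N + 1 / Suc l) * emeasure m (cball x r) \<and>
      ennreal \<theta> * emeasure m (cball x r) \<le> emeasure m (cball x r \<inter> E)" for l r
  have "\<exists>r. 0 < r \<and> r < b \<and> good_at k r" if "0 < b" for k b
  proof -
    have "0 < min b (\<rho> / K)"
      using that \<rho> K by simp
    then obtain j :: nat where j: "1 / Suc j < min b (\<rho> / K)"
      by (rule nat_approx_posE)
    obtain r where r: "0 < r" "r < 1 / Suc j"
      and "emeasure m (cball x (K * r)) \<le> ennreal (N + 1 / Suc k) * emeasure m (cball x r)"
      and "ennreal \<theta> * emeasure m (cball x r) \<le> emeasure m (cball x r \<inter> E)"
      using radii by blast
    moreover have "r < \<rho> / K"
      using r j by simp
    then have "K * r \<le> \<rho>"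
      using K by (simp add: field_simps)
    ultimately show ?thesis
      using j by (intro exI[of _ r]) (auto simp: good_at_def)
  qed
  then obtain rl :: "nat \<Rightarrow> real" where rl: "\<And>l. 0 < rl l" "decseq rl" "rl \<longlonglongrightarrow> 0"
    and good: "\<And>l. good_at l (rl l)"
    by (rule decreasing_sequence_of_witnesses[where P = good_at]) blast+
  have small: "\<And>l. K * rl l \<le> \<rho>"
    and doubling: "\<And>l. emeasure m (cball x (K * rl l)) \<le> ennreal (N + 1 / Suc l) * emeasure m (cball x (rl l))"
    and dense: "\<And>l. ennreal \<theta> * emeasure m (cball x (rl l)) \<le> emeasure m (cball x (rl l) \<inter> E)"
    using good by (auto simp: good_at_def)
  have "0 < measure m (cball x (rl l))"
    "\<And>c. c \<le> K \<Longrightarrow> measure m (cball x (c * rl l)) \<le> (N + 1 / Suc l) * measure m (cball x (rl l))"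
    "\<theta> * measure m (cball x (rl l)) \<le> measure m (cball x (rl l) \<inter> E)" for l
    using measure_bounds_at_radius[OF sm E x rl(1) K
        emeasure_cball_finite_mono[OF sm small \<rho>(2)] _ \<theta> doubling dense] N
    by auto
  with rl show ?thesis
    unfolding good_radii_def by blast
qed

lemma AE_dense_at_small_radii:
  fixes m :: "'a::polish_space measure"
  assumes sm: "sets m = sets borel" and lf: "\<And>x. \<exists>r>0. emeasure m (cball x r) < \<infinity>"
    and E: "E \<in> sets borel" and K: "5 \<le> K" and N: "lower_C m K = ereal N" "0 \<le> N"
    and \<theta>: "0 \<le> \<theta>" "\<theta> < 1"
  shows "AE x in m. x \<in> E \<longrightarrow> (\<forall>k j. \<exists>r. 0 < r \<and> r < 1 / Suc j \<and>
      emeasure m (cball x (K * r)) \<le> ennreal (N + 1 / Suc k) * emeasure m (cball x r) \<and>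
      ennreal \<theta> * emeasure m (cball x r) \<le> emeasure m (cball x r \<inter> E))"
proof -
  define bad where "bad k j = {x \<in> E \<inter> supp m. \<forall>r. 0 < r \<longrightarrow> r < 1 / Suc j \<longrightarrow>
      emeasure m (cball x (K * r)) \<le> ennreal (N + 1 / Suc k) * emeasure m (cball x r) \<longrightarrow>
      emeasure m (cball x r \<inter> E) < ennreal \<theta> * emeasure m (cball x r)}" for k j :: nat
  have "AE x in m. x \<notin> bad k j" for k j
  proof (rule AE_notin_low_density_set[OF sm lf E _ K _ \<theta>, where \<delta> = "1 / Suc j"])
    fix x b assume x: "x \<in> bad k j" and b: "0 < (b::real)"
    obtain \<rho> where \<rho>: "0 < \<rho>" "emeasure m (cball x \<rho>) < \<infinity>"
      using lf by blast
    have "x \<in> supp m"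
      using x by (simp add: bad_def)
    moreover have "1 \<le> K"
      using K by simp
    moreover have "lower_C m K < ereal (N + 1 / Suc k)"
      using N by simp
    ultimately obtain r where "0 < r" "r < b"
      "emeasure m (cball x (K * r)) \<le> ennreal (N + 1 / Suc k) * emeasure m (cball x r)"
      using radius_with_ratio_below[OF sm _ _ \<rho> _ b] by blast
    then show "\<exists>r>0. r < b \<and>
        emeasure m (cball x (K * r)) \<le> ennreal (N + 1 / Suc k) * emeasure m (cball x r)"
      by blast
  qed (use N in \<open>auto simp: bad_def\<close>)
  then have "AE x in m. \<forall>k j. x \<notin> bad k j"
    by (simp add: AE_all_countable)
  with AE_in_supp[OF sm] show ?thesis
    by eventually_elim (auto simp: bad_def not_less)
qed

lemma AE_good_radii:
  fixes m :: "'a::polish_space measure"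
  assumes sm: "sets m = sets borel" and lf: "\<And>x. \<exists>r>0. emeasure m (cball x r) < \<infinity>"
    and E: "E \<in> sets borel" and K: "5 \<le> K" and N: "lower_C m K = ereal N" "0 \<le> N"
    and \<theta>: "0 \<le> \<theta>" "\<theta> < 1"
  shows "AE x in m. x \<in> E \<longrightarrow> (\<exists>rl. good_radii m E K N \<theta> x rl)"
  using AE_in_supp[OF sm] AE_dense_at_small_radii[OF sm lf E K N \<theta>]
proof eventually_elim
  case (elim x)
  obtain \<rho> where "0 < \<rho>" "emeasure m (cball x \<rho>) < \<infinity>"
    using lf by blast
  with elim show ?case
    using K N \<theta> E sm by (intro impI good_radii_exist[OF sm _ elim(1)]) auto
qed

lemma supp_nonempty:
  fixes m :: "'a::{metric_space,second_countable_topology} measure"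
  assumes "is_measure_on m"
  shows "supp m \<noteq> {}"
proof
  assume "supp m = {}"
  with assms AE_in_supp[of m] have "AE x in m. False"
    by (simp add: is_measure_on_def)
  then have "emeasure m (space m) = 0"
    by (simp add: trivial_limit_def flip: ae_filter_eq_bot_iff)
  moreover have "space m = UNIV"
    using assms by (metis is_measure_on_def sets_eq_imp_space_eq space_borel)
  ultimately show False
    using assms by (simp add: is_measure_on_def)
qed

lemma lower_C_real:
  fixes \<mu> m :: "'a::polish_space measure"
  assumes "mms \<mu>" and "unif_loc_doubling \<mu>" and m: "is_measure_on m" and "weakly_noncollapsed \<mu> m"
    and K: "1 < K"
  obtains N where "lower_C m K = ereal N" "1 \<le> N"
proof -
  obtain x \<rho> where "x \<in> supp m" "0 < \<rho>" "emeasure m (cball x \<rho>) < \<infinity>"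
    using supp_nonempty[OF m] m by (force simp: is_measure_on_def)
  then have "1 \<le> lower_C m K"
    using K m by (intro lower_C_ge_1) (auto simp: is_measure_on_def)
  moreover have "lower_C m K < \<infinity>"
    using assms(1,2,4) K by (rule lower_C_finite)
  ultimately show thesis
    using that by (cases "lower_C m K") auto
qed

theorem mainTheorem6:
  fixes \<mu> m :: "'a::polish_space measure" and E :: "'a set" and c :: real
  assumes "mms \<mu>" and "unif_loc_doubling \<mu>"
    and "is_measure_on m" and "weakly_noncollapsed \<mu> m"
    and "E \<in> sets borel" and "c \<ge> 1"
  shows "(AE x in m. x \<in> E \<longrightarrow>
           (\<exists>rl :: nat \<Rightarrow> real. (\<forall>l. rl l > 0) \<and> decseq rl \<and> rl \<longlonglongrightarrow> 0 \<and>
              limsup (\<lambda>l. ereal (measure m (cball x (max c 5 * rl l)) / measure m (cball x (rl l))))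
                \<le> lower_C m (5 * max c 5) \<and>
              liminf (\<lambda>l. ereal (measure m (cball x (rl l) \<inter> E) / measure m (cball x (rl l))))
                \<ge> 1 / (2 * lower_C m (5 * max c 5))))
         \<and> (AE x in m. x \<in> E \<longrightarrow>
              Limsup (at_right 0) (\<lambda>r. ereal (measure m (cball x r \<inter> E) / measure m (cball x r))) > 0)"
proof -
  have sm: "sets m = sets borel" and lf: "\<And>x. \<exists>r>0. emeasure m (cball x r) < \<infinity>"
    using \<open>is_measure_on m\<close> by (auto simp: is_measure_on_def)
  define K where "K = 5 * max c 5"
  have K: "5 \<le> K" "1 < K" "max c 5 \<le> K"
    by (auto simp: K_def)
  obtain N where N: "lower_C m K = ereal N" "1 \<le> N"
    using lower_C_real[OF assms(1-4) K(2)] by blast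
  \<comment> \<open>The density bound \<open>\<theta> = 1/(2N)\<close> is what the statement asks for; any \<open>\<theta> < 1\<close> would do.\<close>
  have radii: "AE x in m. x \<in> E \<longrightarrow> (\<exists>rl. good_radii m E K N (1 / (2 * N)) x rl)"
    using N by (intro AE_good_radii[OF sm lf \<open>E \<in> sets borel\<close> K(1)]) auto
  have \<theta>: "1 / (2 * ereal N) = ereal (1 / (2 * N))"
    using N by (simp add: one_ereal_def)
  show ?thesis
    unfolding K_def[symmetric] N(1) \<theta>
  proof
    show "AE x in m. x \<in> E \<longrightarrow> (\<exists>rl :: nat \<Rightarrow> real. (\<forall>l. rl l > 0) \<and> decseq rl \<and> rl \<longlonglongrightarrow> 0 \<and>
        limsup (\<lambda>l. ereal (measure m (cball x (max c 5 * rl l)) / measure m (cball x (rl l)))) \<le> ereal N \<and>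
        liminf (\<lambda>l. ereal (measure m (cball x (rl l) \<inter> E) / measure m (cball x (rl l)))) \<ge> ereal (1 / (2 * N)))"
      using radii by (rule eventually_mono) (use good_radii_density_bounds K(3) in blast)
    show "AE x in m. x \<in> E \<longrightarrow>
        Limsup (at_right 0) (\<lambda>r. ereal (measure m (cball x r \<inter> E) / measure m (cball x r))) > 0"
      using radii by (rule eventually_mono) (use good_radii_Limsup_pos N in force)
  qed
qed

end
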